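(* Let $(M,\eta,\xi,\phi,g)$ be a non-K-contact contact metric manifold satisfying the weak $(\kappa,\mu)$ condition $R(X,\xi)\xi=\kappa(X-\eta(X)\xi)+\mu hX$ for real constants $\kappa,\mu$ (so $\kappa<1$). Let $\tilde\phi=\frac{1}{\sqrt{1-\kappa}}h$ and $\tilde h=\frac12L_\xi\tilde\phi=\frac{1}{2\sqrt{1-\kappa}}L_\xi h$. Then $$\tilde h=\frac{1}{2\sqrt{1-\kappa}}\big((2-\mu)\phi h+2(1-\kappa)\phi\big),\qquad \tilde h^2=\Big((1-\kappa)-\big(1-\tfrac{\mu}{2}\big)^2\Big)\phi^2 .$$
   Context: A contact metric structure $(M,\eta,\xi,\phi,g)$ consists of a contact form $\eta$, its Reeb field $\xi$, a Riemannian metric $g$ and an endomorphism field $\phi$ with $\eta(\xi)=1$, $\phi^2=-\mathrm{Id}+\eta\otimes\xi$, $\phi\xi=0$, $d\eta=2g(\cdot,\phi\cdot)$. $h=\frac12L_\xi\phi$ ($L_\xi$ the Lie derivative along $\xi$); K-contact means $h=0$. $R(X,Y)=[\nabla_X,\nabla_Y]-\nabla_{[X,Y]}$ for the Levi-Civita connection of $g$. *)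

theory Defs
  imports "HOL-Analysis.Analysis"
begin

text \<open>Local (coordinate) model of a Riemannian / contact metric manifold:
  an open set U of a finite-dimensional real Euclidean space 'a.
  Vector fields are maps 'a => 'a, (1,1)-tensor fields are maps p => (endomorphism of 'a),
  1-forms are maps p => ('a => real), the metric is p => bilinear form.\<close>

primrec Ck_on :: "nat \<Rightarrow> 'a::euclidean_space set \<Rightarrow> ('a \<Rightarrow> 'b::real_normed_vector) \<Rightarrow> bool" where
  "Ck_on 0 U f = continuous_on U f"
| "Ck_on (Suc k) U f = (f differentiable_on U \<and>
       (\<forall>v. Ck_on k U (\<lambda>p. frechet_derivative f (at p) v)))"

definition smooth_on :: "'a::euclidean_space set \<Rightarrow> ('a \<Rightarrow> 'b::real_normed_vector) \<Rightarrow> bool" where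
  "smooth_on U f \<longleftrightarrow> (\<forall>k. Ck_on k U f)"

definition dir_deriv :: "('a::euclidean_space \<Rightarrow> 'a) \<Rightarrow> ('a \<Rightarrow> 'b::real_normed_vector) \<Rightarrow> 'a \<Rightarrow> 'b" where
  "dir_deriv X f p = frechet_derivative f (at p) (X p)"

definition lie_bracket :: "('a::euclidean_space \<Rightarrow> 'a) \<Rightarrow> ('a \<Rightarrow> 'a) \<Rightarrow> 'a \<Rightarrow> 'a" where
  "lie_bracket X Y p = dir_deriv X Y p - dir_deriv Y X p"

text \<open>Christoffel symbols of the Levi-Civita connection of g (Koszul formula):
  Gamma p u v is the unique w with g_p(w,z) = 1/2 (u g(v,z) + v g(u,z) - z g(u,v)) for all z.\<close>
definition christoffel :: "('a::euclidean_space \<Rightarrow> 'a \<Rightarrow> 'a \<Rightarrow> real) \<Rightarrow> 'a \<Rightarrow> 'a \<Rightarrow> 'a \<Rightarrow> 'a" where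
  "christoffel g p u v = (THE w. \<forall>z. g p w z =
      (frechet_derivative (\<lambda>q. g q v z) (at p) u
     + frechet_derivative (\<lambda>q. g q u z) (at p) v
     - frechet_derivative (\<lambda>q. g q u v) (at p) z) / 2)"

definition levi_civita :: "('a::euclidean_space \<Rightarrow> 'a \<Rightarrow> 'a \<Rightarrow> real) \<Rightarrow> ('a \<Rightarrow> 'a) \<Rightarrow> ('a \<Rightarrow> 'a) \<Rightarrow> 'a \<Rightarrow> 'a" where
  "levi_civita g X Y p = dir_deriv X Y p + christoffel g p (X p) (Y p)"

definition curvature :: "('a::euclidean_space \<Rightarrow> 'a \<Rightarrow> 'a \<Rightarrow> real) \<Rightarrow> ('a \<Rightarrow> 'a) \<Rightarrow> ('a \<Rightarrow> 'a) \<Rightarrow> ('a \<Rightarrow> 'a) \<Rightarrow> 'a \<Rightarrow> 'a" where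
  "curvature g X Y Z p = levi_civita g X (levi_civita g Y Z) p
     - levi_civita g Y (levi_civita g X Z) p
     - levi_civita g (lie_bracket X Y) Z p"

text \<open>Lie derivative of a (1,1)-tensor field T along the vector field xi, evaluated at p on v:
  (L_xi T)(V) = [xi, T V] - T [xi, V] for the constant field V = v.\<close>
definition lie_deriv_endo :: "('a::euclidean_space \<Rightarrow> 'a) \<Rightarrow> ('a \<Rightarrow> 'a \<Rightarrow> 'a) \<Rightarrow> 'a \<Rightarrow> 'a \<Rightarrow> 'a" where
  "lie_deriv_endo xi T p v = lie_bracket xi (\<lambda>q. T q v) p - T p (lie_bracket xi (\<lambda>q. v) p)"

text \<open>Exterior derivative of a 1-form, convention d eta(X,Y) = X eta(Y) - Y eta(X) - eta([X,Y]),
  evaluated on constant fields.\<close>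
definition ext_deriv1 :: "('a::euclidean_space \<Rightarrow> 'a \<Rightarrow> real) \<Rightarrow> 'a \<Rightarrow> 'a \<Rightarrow> 'a \<Rightarrow> real" where
  "ext_deriv1 eta p v w = frechet_derivative (\<lambda>q. eta q w) (at p) v
                        - frechet_derivative (\<lambda>q. eta q v) (at p) w"

definition contact_metric_on ::
  "'a::euclidean_space set \<Rightarrow> ('a \<Rightarrow> 'a \<Rightarrow> real) \<Rightarrow> ('a \<Rightarrow> 'a) \<Rightarrow> ('a \<Rightarrow> 'a \<Rightarrow> 'a) \<Rightarrow> ('a \<Rightarrow> 'a \<Rightarrow> 'a \<Rightarrow> real) \<Rightarrow> bool" where
  "contact_metric_on U eta xi phi g \<longleftrightarrow>
     open U \<and>
     smooth_on U xi \<and>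
     (\<forall>v. smooth_on U (\<lambda>p. eta p v)) \<and>
     (\<forall>v. smooth_on U (\<lambda>p. phi p v)) \<and>
     (\<forall>v w. smooth_on U (\<lambda>p. g p v w)) \<and>
     (\<forall>p\<in>U.
        linear (eta p) \<and> linear (phi p) \<and> bilinear (g p) \<and>
        (\<forall>v w. g p v w = g p w v) \<and>
        (\<forall>v. v \<noteq> 0 \<longrightarrow> g p v v > 0) \<and>
        eta p (xi p) = 1 \<and>
        (\<forall>v. phi p (phi p v) = - v + eta p v *\<^sub>R xi p) \<and>
        phi p (xi p) = 0 \<and>
        (\<forall>v. eta p v = g p v (xi p)) \<and>
        (\<forall>v w. ext_deriv1 eta p v w = 2 * g p v (phi p w)))"

definition h_tensor :: "('a::euclidean_space \<Rightarrow> 'a) \<Rightarrow> ('a \<Rightarrow> 'a \<Rightarrow> 'a) \<Rightarrow> 'a \<Rightarrow> 'a \<Rightarrow> 'a" where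
  "h_tensor xi phi p v = (1/2) *\<^sub>R lie_deriv_endo xi phi p v"

end

theory Submission
  imports Defs
begin

text \<open>In a chart, write \<open>A = \<nabla>\<xi>\<close>. The contact metric identities give Blair's formula
  \<open>A = -\<phi> - \<phi>h\<close>, with \<open>h\<close> symmetric and \<open>h\<phi> = -\<phi>h\<close>. For a constant field \<open>v\<close>,
  \<open>R(v,\<xi>)\<xi> = -(L\<^sub>\<xi>A)v - A\<^sup>2v\<close>, where \<open>A\<^sup>2 = \<phi>\<^sup>2 + h\<^sup>2\<close> and
  \<open>L\<^sub>\<xi>A = -2h - 2h\<^sup>2 - \<phi>L\<^sub>\<xi>h\<close>. Inserted into the \<open>(\<kappa>,\<mu>)\<close> condition this expresses
  \<open>\<phi>L\<^sub>\<xi>h\<close> through \<open>\<phi>\<close> and \<open>h\<close>; together with \<open>(L\<^sub>\<xi>h)\<phi> + \<phi>(L\<^sub>\<xi>h) = -4h\<^sup>2\<close>,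
  obtained by differentiating \<open>h\<phi> = -\<phi>h\<close> along \<open>\<xi>\<close>, it yields \<open>h\<^sup>2 = (\<kappa> - 1)\<phi>\<^sup>2\<close> and
  \<open>L\<^sub>\<xi>h = (2 - \<mu>)\<phi>h + 2(1 - \<kappa>)\<phi>\<close>. As \<open>h\<close> is symmetric and not zero,
  \<open>|hv|\<^sup>2 = (1 - \<kappa>)|\<phi>v|\<^sup>2\<close> forces \<open>\<kappa> < 1\<close>; the formula for \<open>h_tilde\<^sup>2\<close> is then a short
  computation with \<open>\<phi>h\<phi> = h\<close>.\<close>

abbreviation fderiv :: "('a::euclidean_space \<Rightarrow> 'b::real_normed_vector) \<Rightarrow> 'a \<Rightarrow> 'a \<Rightarrow> 'b" where
  "fderiv f p \<equiv> frechet_derivative f (at p)"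

lemmas linear_rules = linear_add linear_diff linear_neg linear_scale linear_0

section \<open>Smooth maps and fields of linear maps\<close>

lemma Ck_on_const: "Ck_on k U (\<lambda>q. c)"
  by (induction k arbitrary: c) simp_all

lemma smooth_on_const: "smooth_on U (\<lambda>q. c)"
  by (simp add: smooth_on_def Ck_on_const)

lemma smooth_on_fderiv: "smooth_on U f \<Longrightarrow> smooth_on U (\<lambda>q. fderiv f q v)"
  unfolding smooth_on_def by (metis Ck_on.simps(2))

lemma smooth_on_imp_differentiable:
  "smooth_on U f \<Longrightarrow> open U \<Longrightarrow> q \<in> U \<Longrightarrow> f differentiable (at q)"
  unfolding smooth_on_def by (metis Ck_on.simps(2) at_within_open differentiable_on_def)

lemma smooth_on_imp_isCont: "smooth_on U f \<Longrightarrow> open U \<Longrightarrow> q \<in> U \<Longrightarrow> isCont f q"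
  unfolding smooth_on_def by (metis Ck_on.simps(1) continuous_on_eq_continuous_at)

lemma fderiv_cong_open:
  assumes "open U" "p \<in> U" "\<And>q. q \<in> U \<Longrightarrow> f q = f' q"
  shows "fderiv f p = fderiv f' p"
proof -
  have "(f has_derivative d) (at p) \<longleftrightarrow> (f' has_derivative d) (at p)" for d
    using has_derivative_transform_within_open assms by metis
  then show ?thesis unfolding frechet_derivative_def by simp
qed

lemma fderiv_eq_0_if_constant_on:
  assumes "open U" "p \<in> U" "\<And>q. q \<in> U \<Longrightarrow> f q = c"
  shows "fderiv f p = (\<lambda>u. 0)"
  using fderiv_cong_open[of U p f "\<lambda>q. c"] assms by simp

lemma differentiable_cong_open:
  assumes "open U" "p \<in> U" "\<And>q. q \<in> U \<Longrightarrow> f q = f' q" "f differentiable (at p)"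
  shows "f' differentiable (at p)"
  using assms has_derivative_transform_within_open unfolding differentiable_def by metis

lemma linear_eq_sum_Basis: "linear F \<Longrightarrow> F w = (\<Sum>i\<in>Basis. (w \<bullet> i) *\<^sub>R F i)"
  by (metis (no_types, lifting) euclidean_representation linear_scale linear_sum sum.cong)

lemma has_derivative_apply_linear_field_Basis:
  fixes F :: "'a::euclidean_space \<Rightarrow> 'a \<Rightarrow> 'b::real_normed_vector"
  assumes U: "open U" "p \<in> U" and lin: "\<And>q. q \<in> U \<Longrightarrow> linear (F q)"
    and dF: "\<And>w. (\<lambda>q. F q w) differentiable (at p)"
    and dX: "(X has_derivative X') (at p)"
  shows "((\<lambda>q. F q (X q)) has_derivative
          (\<lambda>u. F p (X' u) + (\<Sum>i\<in>Basis. (X p \<bullet> i) *\<^sub>R fderiv (\<lambda>q. F q i) p u))) (at p)"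
proof -
  have "((\<lambda>q. \<Sum>i\<in>Basis. (X q \<bullet> i) *\<^sub>R F q i) has_derivative
        (\<lambda>u. \<Sum>i\<in>Basis. (X p \<bullet> i) *\<^sub>R fderiv (\<lambda>q. F q i) p u + (X' u \<bullet> i) *\<^sub>R F p i)) (at p)"
    using dF by (intro has_derivative_sum has_derivative_scaleR has_derivative_inner_left dX
        frechet_derivative_works[THEN iffD1])
  moreover have "(\<Sum>i\<in>Basis. (X p \<bullet> i) *\<^sub>R fderiv (\<lambda>q. F q i) p u + (X' u \<bullet> i) *\<^sub>R F p i)
     = F p (X' u) + (\<Sum>i\<in>Basis. (X p \<bullet> i) *\<^sub>R fderiv (\<lambda>q. F q i) p u)" for u
    using linear_eq_sum_Basis[OF lin[OF U(2)], of "X' u"] by (simp add: sum.distrib add.commute)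
  ultimately show ?thesis
    by (auto intro: has_derivative_transform_within_open[OF _ U] simp: linear_eq_sum_Basis[OF lin])
qed

lemma has_derivative_apply_linear_field_const:
  fixes F :: "'a::euclidean_space \<Rightarrow> 'a \<Rightarrow> 'b::real_normed_vector"
  assumes "open U" "p \<in> U" "\<And>q. q \<in> U \<Longrightarrow> linear (F q)" "\<And>w. (\<lambda>q. F q w) differentiable (at p)"
  shows "((\<lambda>q. F q w) has_derivative (\<lambda>u. \<Sum>i\<in>Basis. (w \<bullet> i) *\<^sub>R fderiv (\<lambda>q. F q i) p u)) (at p)"
  using has_derivative_apply_linear_field_Basis[OF assms has_derivative_const[of w]]
    linear_0[OF assms(3)[OF assms(2)]] by simp

lemma has_derivative_apply_linear_field:
  fixes F :: "'a::euclidean_space \<Rightarrow> 'a \<Rightarrow> 'b::real_normed_vector"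
  assumes "open U" "p \<in> U" "\<And>q. q \<in> U \<Longrightarrow> linear (F q)" "\<And>w. (\<lambda>q. F q w) differentiable (at p)"
    and dX: "X differentiable (at p)"
  shows "((\<lambda>q. F q (X q)) has_derivative
          (\<lambda>u. F p (fderiv X p u) + fderiv (\<lambda>q. F q (X p)) p u)) (at p)"
  using has_derivative_apply_linear_field_Basis[OF assms(1-4) frechet_derivative_works[THEN iffD1, OF dX]]
    frechet_derivative_at[OF has_derivative_apply_linear_field_const[OF assms(1-4), of "X p"], symmetric]
  by simp

lemma fderiv_apply_linear_field:
  fixes F :: "'a::euclidean_space \<Rightarrow> 'a \<Rightarrow> 'b::real_normed_vector"
  assumes "open U" "p \<in> U" "\<And>q. q \<in> U \<Longrightarrow> linear (F q)" "\<And>w. (\<lambda>q. F q w) differentiable (at p)"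
    and "X differentiable (at p)"
  shows "fderiv (\<lambda>q. F q (X q)) p u = F p (fderiv X p u) + fderiv (\<lambda>q. F q (X p)) p u"
  using frechet_derivative_at[OF has_derivative_apply_linear_field[OF assms], symmetric] by simp

lemma differentiable_apply_linear_field:
  fixes F :: "'a::euclidean_space \<Rightarrow> 'a \<Rightarrow> 'b::real_normed_vector"
  assumes "open U" "p \<in> U" "\<And>q. q \<in> U \<Longrightarrow> linear (F q)" "\<And>w. (\<lambda>q. F q w) differentiable (at p)"
    and "X differentiable (at p)"
  shows "(\<lambda>q. F q (X q)) differentiable (at p)"
  using has_derivative_apply_linear_field[OF assms] differentiable_def by blast

lemma linear_fderiv_linear_field:
  fixes F :: "'a::euclidean_space \<Rightarrow> 'a \<Rightarrow> 'b::real_normed_vector"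
  assumes "open U" "p \<in> U" "\<And>q. q \<in> U \<Longrightarrow> linear (F q)" "\<And>w. (\<lambda>q. F q w) differentiable (at p)"
  shows "linear (\<lambda>w. fderiv (\<lambda>q. F q w) p u)"
proof -
  have "(\<lambda>w. fderiv (\<lambda>q. F q w) p u) = (\<lambda>w. \<Sum>i\<in>Basis. (w \<bullet> i) *\<^sub>R fderiv (\<lambda>q. F q i) p u)"
    using frechet_derivative_at[OF has_derivative_apply_linear_field_const[OF assms]] by metis
  moreover have "linear (\<lambda>w. \<Sum>i\<in>Basis. (w \<bullet> i) *\<^sub>R fderiv (\<lambda>q. F q i) p u)"
    by (intro linear_compose_sum ballI bounded_linear.linear bounded_linear_scaleR_const
        bounded_linear_inner_left)
  ultimately show ?thesis by simp
qed

section \<open>Symmetry of second derivatives\<close>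

lemma mvt_along_line:
  fixes F :: "'a::euclidean_space \<Rightarrow> real"
  assumes t: "0 < t" and dF: "\<And>s. 0 \<le> s \<Longrightarrow> s \<le> t \<Longrightarrow> F differentiable (at (x + s *\<^sub>R v))"
  shows "\<exists>s. 0 < s \<and> s < t \<and> F (x + t *\<^sub>R v) - F x = t * fderiv F (x + s *\<^sub>R v) v"
proof -
  define \<gamma> where "\<gamma> s = F (x + s *\<^sub>R v)" for s
  have der: "(\<gamma> has_derivative (\<lambda>r. fderiv F (x + s *\<^sub>R v) (r *\<^sub>R v))) (at s)"
    if "0 \<le> s" "s \<le> t" for s
  proof -
    have "((\<lambda>s. x + s *\<^sub>R v) has_derivative (\<lambda>r. r *\<^sub>R v)) (at s)"
      by (intro derivative_eq_intros) auto
    from diff_chain_at[OF this frechet_derivative_works[THEN iffD1, OF dF[OF that]]]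
    show ?thesis unfolding \<gamma>_def comp_def .
  qed
  have "continuous_on {0..t} \<gamma>"
    using der has_derivative_continuous by (metis atLeastAtMost_iff continuous_at_imp_continuous_on)
  then obtain s where s: "0 < s" "s < t" "\<gamma> t - \<gamma> 0 = fderiv F (x + s *\<^sub>R v) ((t - 0) *\<^sub>R v)"
    by (rule mvt[OF t, of \<gamma> "\<lambda>s r. fderiv F (x + s *\<^sub>R v) (r *\<^sub>R v)"]) (use der in auto)
  moreover have "fderiv F (x + s *\<^sub>R v) ((t - 0) *\<^sub>R v) = t * fderiv F (x + s *\<^sub>R v) v"
    using linear_scale[OF linear_frechet_derivative[OF dF]] s by simp
  ultimately show ?thesis unfolding \<gamma>_def by auto
qed

lemma second_difference_mvt:
  fixes f :: "'a::euclidean_space \<Rightarrow> real"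
  assumes t: "0 < t"
    and inU: "\<And>s s'. 0 \<le> s \<Longrightarrow> s \<le> t \<Longrightarrow> 0 \<le> s' \<Longrightarrow> s' \<le> t \<Longrightarrow> p + s *\<^sub>R a + s' *\<^sub>R b \<in> U"
    and df: "\<And>q. q \<in> U \<Longrightarrow> f differentiable (at q)"
    and ddf: "\<And>q c. q \<in> U \<Longrightarrow> (\<lambda>q. fderiv f q c) differentiable (at q)"
  shows "\<exists>s s'. 0 < s \<and> s < t \<and> 0 < s' \<and> s' < t \<and>
     f (p + t *\<^sub>R a + t *\<^sub>R b) - f (p + t *\<^sub>R a) - f (p + t *\<^sub>R b) + f p
       = t * (t * fderiv (\<lambda>q. fderiv f q a) (p + s *\<^sub>R a + s' *\<^sub>R b) b)"
proof -
  define \<psi> where "\<psi> q = f (q + t *\<^sub>R b) - f q" for q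
  have d\<psi>: "(\<psi> has_derivative (\<lambda>u. fderiv f (q + t *\<^sub>R b) u - fderiv f q u)) (at q)"
    if "q \<in> U" "q + t *\<^sub>R b \<in> U" for q
  proof -
    have "((\<lambda>q. q + t *\<^sub>R b) has_derivative (\<lambda>u. u)) (at q)"
      by (intro derivative_eq_intros) auto
    from diff_chain_at[OF this frechet_derivative_works[THEN iffD1, OF df[OF that(2)]]]
    have "((\<lambda>q. f (q + t *\<^sub>R b)) has_derivative fderiv f (q + t *\<^sub>R b)) (at q)"
      unfolding comp_def by simp
    then show ?thesis unfolding \<psi>_def
      using df that by (intro has_derivative_diff frechet_derivative_works[THEN iffD1])
  qed
  have in_a: "p + s *\<^sub>R a \<in> U" "p + s *\<^sub>R a + t *\<^sub>R b \<in> U" if "0 \<le> s" "s \<le> t" for s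
    using inU[OF that, of 0] inU[OF that, of t] t by auto
  obtain s where s: "0 < s" "s < t" "\<psi> (p + t *\<^sub>R a) - \<psi> p = t * fderiv \<psi> (p + s *\<^sub>R a) a"
    using mvt_along_line[OF t, of \<psi> p a] d\<psi> in_a differentiable_def by blast
  have "fderiv \<psi> (p + s *\<^sub>R a) a = fderiv f (p + s *\<^sub>R a + t *\<^sub>R b) a - fderiv f (p + s *\<^sub>R a) a"
    using frechet_derivative_at[OF d\<psi>[OF in_a[of s]], symmetric] s by simp
  moreover obtain s' where "0 < s'" "s' < t"
    "fderiv f (p + s *\<^sub>R a + t *\<^sub>R b) a - fderiv f (p + s *\<^sub>R a) a
      = t * fderiv (\<lambda>q. fderiv f q a) (p + s *\<^sub>R a + s' *\<^sub>R b) b"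
    using mvt_along_line[OF t, of "\<lambda>q. fderiv f q a" "p + s *\<^sub>R a" b] ddf inU s by auto
  moreover have "\<psi> (p + t *\<^sub>R a) - \<psi> p
      = f (p + t *\<^sub>R a + t *\<^sub>R b) - f (p + t *\<^sub>R a) - f (p + t *\<^sub>R b) + f p"
    unfolding \<psi>_def by simp
  ultimately show ?thesis using s by metis
qed

text \<open>Both mixed partials compute the same second difference, at nearby points.\<close>
lemma mixed_partials_agree_nearby:
  fixes f :: "'a::euclidean_space \<Rightarrow> real"
  assumes U: "open U" "p \<in> U" and f: "smooth_on U f" and "r > 0"
  shows "\<exists>x y. dist x p < r \<and> dist y p < r \<and>
           fderiv (\<lambda>q. fderiv f q a) x b = fderiv (\<lambda>q. fderiv f q b) y a"
proof -
  obtain r0 where r0: "r0 > 0" "ball p r0 \<subseteq> U" using U openE by blast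
  define N where "N = norm a + norm b + 1"
  define t where "t = min r r0 / (2 * N)"
  have "N > 0" unfolding N_def by (simp add: add_nonneg_pos)
  then have t: "t > 0" "t * N < r" "t * N < r0"
    unfolding t_def using r0 \<open>r > 0\<close> by auto
  have near: "dist (p + s *\<^sub>R c + s' *\<^sub>R d) p \<le> t * N"
    if "0 \<le> s" "s \<le> t" "0 \<le> s'" "s' \<le> t" "norm c + norm d \<le> N" for s s' c d
  proof -
    have "dist (p + s *\<^sub>R c + s' *\<^sub>R d) p \<le> s * norm c + s' * norm d"
      using norm_triangle_ineq[of "s *\<^sub>R c" "s' *\<^sub>R d"] that by (simp add: dist_norm)
    also have "\<dots> \<le> t * (norm c + norm d)"
      using that by (simp add: distrib_left add_mono mult_right_mono)
    also have "\<dots> \<le> t * N"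
      using that t by (simp add: mult_left_mono)
    finally show ?thesis .
  qed
  have inU: "p + s *\<^sub>R c + s' *\<^sub>R d \<in> U"
    if "0 \<le> s" "s \<le> t" "0 \<le> s'" "s' \<le> t" "norm c + norm d \<le> N" for s s' c d
    using near[OF that] t r0 by (auto simp: dist_commute)
  have N: "norm a + norm b \<le> N" "norm b + norm a \<le> N" unfolding N_def by simp_all
  have df: "\<And>q. q \<in> U \<Longrightarrow> f differentiable (at q)"
    using smooth_on_imp_differentiable[OF f U(1)] .
  have ddf: "\<And>q c. q \<in> U \<Longrightarrow> (\<lambda>q. fderiv f q c) differentiable (at q)"
    using smooth_on_imp_differentiable[OF smooth_on_fderiv[OF f] U(1)] .
  obtain s s' where s: "0 < s" "s < t" "0 < s'" "s' < t"
    "f (p + t *\<^sub>R a + t *\<^sub>R b) - f (p + t *\<^sub>R a) - f (p + t *\<^sub>R b) + f p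
       = t * (t * fderiv (\<lambda>q. fderiv f q a) (p + s *\<^sub>R a + s' *\<^sub>R b) b)"
    using second_difference_mvt[OF t(1) inU[OF _ _ _ _ N(1)] df ddf] by blast
  obtain u u' where u: "0 < u" "u < t" "0 < u'" "u' < t"
    "f (p + t *\<^sub>R b + t *\<^sub>R a) - f (p + t *\<^sub>R b) - f (p + t *\<^sub>R a) + f p
       = t * (t * fderiv (\<lambda>q. fderiv f q b) (p + u *\<^sub>R b + u' *\<^sub>R a) a)"
    using second_difference_mvt[OF t(1) inU[OF _ _ _ _ N(2)] df ddf] by blast
  have "f (p + t *\<^sub>R b + t *\<^sub>R a) = f (p + t *\<^sub>R a + t *\<^sub>R b)" by (simp add: add_ac)
  then have "t * (t * fderiv (\<lambda>q. fderiv f q a) (p + s *\<^sub>R a + s' *\<^sub>R b) b)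
      = t * (t * fderiv (\<lambda>q. fderiv f q b) (p + u *\<^sub>R b + u' *\<^sub>R a) a)"
    using s(5) u(5) by linarith
  then have "fderiv (\<lambda>q. fderiv f q a) (p + s *\<^sub>R a + s' *\<^sub>R b) b
      = fderiv (\<lambda>q. fderiv f q b) (p + u *\<^sub>R b + u' *\<^sub>R a) a"
    using t(1) by simp
  moreover have "dist (p + s *\<^sub>R a + s' *\<^sub>R b) p < r" "dist (p + u *\<^sub>R b + u' *\<^sub>R a) p < r"
    using near[OF _ _ _ _ N(1), of s s'] near[OF _ _ _ _ N(2), of u u'] s u t by auto
  ultimately show ?thesis by blast
qed

lemma fderiv_fderiv_commute:
  fixes f :: "'a::euclidean_space \<Rightarrow> real"
  assumes U: "open U" "p \<in> U" and f: "smooth_on U f"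
  shows "fderiv (\<lambda>q. fderiv f q a) p b = fderiv (\<lambda>q. fderiv f q b) p a"
proof (rule ccontr)
  define d1 where "d1 q = fderiv (\<lambda>q. fderiv f q a) q b" for q
  define d2 where "d2 q = fderiv (\<lambda>q. fderiv f q b) q a" for q
  define e where "e = \<bar>d1 p - d2 p\<bar> / 2"
  assume "fderiv (\<lambda>q. fderiv f q a) p b \<noteq> fderiv (\<lambda>q. fderiv f q b) p a"
  then have e: "e > 0" unfolding e_def d1_def d2_def by simp
  have "isCont d1 p" "isCont d2 p" unfolding d1_def d2_def
    by (intro smooth_on_imp_isCont[OF smooth_on_fderiv[OF smooth_on_fderiv[OF f]] U])+
  then obtain r1 r2 where r: "r1 > 0" "\<And>x. dist x p < r1 \<Longrightarrow> dist (d1 x) (d1 p) < e"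
      "r2 > 0" "\<And>y. dist y p < r2 \<Longrightarrow> dist (d2 y) (d2 p) < e"
    using e unfolding continuous_at_eps_delta by blast
  obtain x y where "dist x p < min r1 r2" "dist y p < min r1 r2" "d1 x = d2 y"
    using mixed_partials_agree_nearby[OF U f, where r="min r1 r2" and a=a and b=b] r(1,3) unfolding d1_def d2_def by auto
  then have "\<bar>d1 p - d2 p\<bar> < 2 * e"
    using r(2)[of x] r(4)[of y] unfolding dist_real_def by auto
  then show False unfolding e_def by simp
qed

section \<open>Contact metric structures in a chart\<close>

lemma bilinear_pos_def_eq_0:
  fixes B :: "'a::euclidean_space \<Rightarrow> 'a \<Rightarrow> real"
  assumes "bilinear B" "\<forall>v. v \<noteq> 0 \<longrightarrow> B v v > 0" "\<forall>i\<in>Basis. B d i = 0"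
  shows "d = 0"
proof -
  have "B d d = (\<Sum>i\<in>Basis. (d \<bullet> i) *\<^sub>R B d i)"
    using assms(1) by (intro linear_eq_sum_Basis) (simp add: bilinear_def)
  then have "B d d = 0" using assms(3) by simp
  then show ?thesis using assms(2) by (metis less_irrefl)
qed

lemma ex1_bilinear_representative:
  fixes B :: "'a::euclidean_space \<Rightarrow> 'a \<Rightarrow> real"
  assumes bl: "bilinear B" and pd: "\<forall>v. v \<noteq> 0 \<longrightarrow> B v v > 0" and lf: "linear f"
  shows "\<exists>!w. \<forall>z. B w z = f z"
proof -
  have l1: "linear (\<lambda>x. B x y)" and l2: "linear (B x)" for x y
    using bl unfolding bilinear_def by simp_all
  define M where "M w = (\<Sum>i\<in>Basis. B w i *\<^sub>R i)" for w
  have M_Basis: "M w \<bullet> j = B w j" if "j \<in> Basis" for w j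
    unfolding M_def using that by (simp add: inner_sum_left inner_Basis if_distrib sum.delta cong: if_cong)
  have "linear M"
    unfolding M_def
    by (intro linear_compose_sum ballI linear_compose[OF l1 linear_scaleR_left, unfolded comp_def])
  moreover have "inj M"
  proof (rule injI)
    fix x y assume "M x = M y"
    then have "\<forall>i\<in>Basis. B (x - y) i = 0"
      using M_Basis[of _ x] M_Basis[of _ y] linear_diff[OF l1] by simp
    then have "x - y = 0" by (rule bilinear_pos_def_eq_0[OF bl pd])
    then show "x = y" by simp
  qed
  ultimately have "surj M" by (simp add: linear_injective_imp_surjective)
  then obtain w where w: "M w = (\<Sum>i\<in>Basis. f i *\<^sub>R i)" by (metis surjD)
  have w_Basis: "B w j = f j" if "j \<in> Basis" for j
    using M_Basis[OF that, of w] that unfolding w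
    by (simp add: inner_sum_left inner_Basis if_distrib sum.delta cong: if_cong)
  have ex: "B w z = f z" for z
  proof -
    have "B w z = (\<Sum>i\<in>Basis. (z \<bullet> i) *\<^sub>R B w i)" by (rule linear_eq_sum_Basis[OF l2])
    also have "\<dots> = (\<Sum>i\<in>Basis. (z \<bullet> i) *\<^sub>R f i)" using w_Basis by simp
    also have "\<dots> = f z" by (rule linear_eq_sum_Basis[OF lf, symmetric])
    finally show ?thesis .
  qed
  have "w' = w" if "\<forall>z. B w' z = f z" for w'
    using bilinear_pos_def_eq_0[OF bl pd, of "w' - w"] that ex linear_diff[OF l1] by simp
  then show ?thesis using ex by blast
qed

locale contact_metric =
  fixes U :: "'a::euclidean_space set" and eta :: "'a \<Rightarrow> 'a \<Rightarrow> real" and xi :: "'a \<Rightarrow> 'a"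
    and phi :: "'a \<Rightarrow> 'a \<Rightarrow> 'a" and g :: "'a \<Rightarrow> 'a \<Rightarrow> 'a \<Rightarrow> real"
  assumes contact_metric_on: "contact_metric_on U eta xi phi g"
begin

lemma open_U: "open U"
  and smooth_xi: "smooth_on U xi"
  and smooth_eta: "smooth_on U (\<lambda>p. eta p v)"
  and smooth_phi: "smooth_on U (\<lambda>p. phi p v)"
  and smooth_g: "smooth_on U (\<lambda>p. g p v w)"
  using contact_metric_on unfolding contact_metric_on_def by simp_all

context
  fixes q assumes q: "q \<in> U"
begin

lemma linear_eta: "linear (eta q)"
  and linear_phi: "linear (phi q)"
  and bilinear_g: "bilinear (g q)"
  and g_commute: "g q v w = g q w v"
  and g_pos: "v \<noteq> 0 \<Longrightarrow> g q v v > 0"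
  and eta_xi: "eta q (xi q) = 1"
  and phi_phi: "phi q (phi q v) = - v + eta q v *\<^sub>R xi q"
  and phi_xi: "phi q (xi q) = 0"
  and eta_eq_g_xi: "eta q v = g q v (xi q)"
  and ext_deriv1_eta: "ext_deriv1 eta q v w = 2 * g q v (phi q w)"
  using contact_metric_on q unfolding contact_metric_on_def by blast+

lemma linear_g_left: "linear (\<lambda>x. g q x y)"
  and linear_g_right: "linear (g q x)"
  using bilinear_g unfolding bilinear_def by simp_all

lemma g_eqI: "(\<And>w. g q v w = g q v' w) \<Longrightarrow> v = v'"
  using bilinear_pos_def_eq_0[OF bilinear_g, of "v - v'"] g_pos linear_diff[OF linear_g_left] by simp

lemma differentiable_xi: "xi differentiable (at q)"
  and differentiable_eta: "(\<lambda>p. eta p v) differentiable (at q)"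
  and differentiable_phi: "(\<lambda>p. phi p v) differentiable (at q)"
  and differentiable_g: "(\<lambda>p. g p v w) differentiable (at q)"
  and differentiable_fderiv_xi: "(\<lambda>p. fderiv xi p a) differentiable (at q)"
  and differentiable_fderiv_eta: "(\<lambda>p. fderiv (\<lambda>r. eta r v) p a) differentiable (at q)"
  and differentiable_fderiv_phi: "(\<lambda>p. fderiv (\<lambda>r. phi r v) p a) differentiable (at q)"
  by (intro smooth_on_imp_differentiable[OF _ open_U q] smooth_on_fderiv
      smooth_xi smooth_eta smooth_phi smooth_g)+

lemma linear_fderiv_xi: "linear (fderiv xi q)"
  and linear_fderiv_eta: "linear (fderiv (\<lambda>r. eta r v) q)"
  and linear_fderiv_phi: "linear (fderiv (\<lambda>r. phi r v) q)"
  and linear_fderiv_g: "linear (fderiv (\<lambda>r. g r v w) q)"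
  by (intro linear_frechet_derivative differentiable_xi differentiable_eta
      differentiable_phi differentiable_g)+

end

lemma linear_fderiv_g_arg: "q \<in> U \<Longrightarrow> linear (\<lambda>z. fderiv (\<lambda>r. g r v z) q u)"
  by (rule linear_fderiv_linear_field[OF open_U]) (auto intro: linear_g_right differentiable_g)

lemma linear_fderiv_eta_arg: "q \<in> U \<Longrightarrow> linear (\<lambda>z. fderiv (\<lambda>r. eta r z) q u)"
  by (rule linear_fderiv_linear_field[OF open_U]) (auto intro: linear_eta differentiable_eta)

lemma linear_fderiv_phi_arg: "q \<in> U \<Longrightarrow> linear (\<lambda>z. fderiv (\<lambda>r. phi r z) q u)"
  by (rule linear_fderiv_linear_field[OF open_U]) (auto intro: linear_phi differentiable_phi)

lemmas g_left_rules = linear_rules[OF linear_g_left]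
  and g_right_rules = linear_rules[OF linear_g_right]
  and phi_rules = linear_rules[OF linear_phi]
  and eta_rules = linear_rules[OF linear_eta]

definition koszul :: "'a \<Rightarrow> 'a \<Rightarrow> 'a \<Rightarrow> 'a \<Rightarrow> real" where
  "koszul p u v z =
    (fderiv (\<lambda>q. g q v z) p u + fderiv (\<lambda>q. g q u z) p v - fderiv (\<lambda>q. g q u v) p z) / 2"

lemma linear_koszul: assumes p: "p \<in> U" shows "linear (koszul p u v)"
proof -
  note lin = linear_fderiv_g_arg[OF p, of v u] linear_fderiv_g_arg[OF p, of u v]
    linear_fderiv_g[OF p, of u v]
  show ?thesis unfolding koszul_def
  proof (rule linearI)
    fix x y
    show "(fderiv (\<lambda>q. g q v (x + y)) p u + fderiv (\<lambda>q. g q u (x + y)) p v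
          - fderiv (\<lambda>q. g q u v) p (x + y)) / 2
       = (fderiv (\<lambda>q. g q v x) p u + fderiv (\<lambda>q. g q u x) p v - fderiv (\<lambda>q. g q u v) p x) / 2
       + (fderiv (\<lambda>q. g q v y) p u + fderiv (\<lambda>q. g q u y) p v - fderiv (\<lambda>q. g q u v) p y) / 2"
      using lin[THEN linear_add, of x y] by (simp add: field_simps)
  next
    fix r x
    show "(fderiv (\<lambda>q. g q v (r *\<^sub>R x)) p u + fderiv (\<lambda>q. g q u (r *\<^sub>R x)) p v
          - fderiv (\<lambda>q. g q u v) p (r *\<^sub>R x)) / 2
       = r *\<^sub>R ((fderiv (\<lambda>q. g q v x) p u + fderiv (\<lambda>q. g q u x) p v
          - fderiv (\<lambda>q. g q u v) p x) / 2)"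
      using lin[THEN linear_scale, of r x] by (simp add: field_simps)
  qed
qed

lemma g_christoffel: assumes p: "p \<in> U" shows "g p (christoffel g p u v) z = koszul p u v z"
proof -
  have "\<exists>!w. \<forall>z. g p w z = koszul p u v z"
    using ex1_bilinear_representative[OF bilinear_g[OF p] _ linear_koszul[OF p]] g_pos[OF p]
    by blast
  from theI'[OF this] show ?thesis
    unfolding christoffel_def koszul_def by simp
qed

lemma fderiv_g_commute: "p \<in> U \<Longrightarrow> fderiv (\<lambda>q. g q u v) p = fderiv (\<lambda>q. g q v u) p"
  by (rule fderiv_cong_open[OF open_U]) (auto intro: g_commute)

lemma christoffel_commute: assumes p: "p \<in> U" shows "christoffel g p u v = christoffel g p v u"
proof (rule g_eqI[OF p])
  fix z
  have "koszul p u v z = koszul p v u z"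
    unfolding koszul_def using fderiv_g_commute[OF p, of u v] by simp
  then show "g p (christoffel g p u v) z = g p (christoffel g p v u) z"
    using g_christoffel[OF p] by simp
qed

lemma christoffel_zero: assumes p: "p \<in> U" shows "christoffel g p v 0 = 0"
proof (rule g_eqI[OF p])
  fix z
  have "fderiv (\<lambda>q. g q 0 z) p = (\<lambda>u. 0)" "fderiv (\<lambda>q. g q v 0) p = (\<lambda>u. 0)"
    by (auto intro!: fderiv_eq_0_if_constant_on[OF open_U p] simp: g_left_rules g_right_rules)
  then show "g p (christoffel g p v 0) z = g p 0 z"
    unfolding g_christoffel[OF p] koszul_def
    using linear_0[OF linear_fderiv_g[OF p]] g_left_rules[OF p] by simp
qed

lemma fderiv_g_christoffel: assumes p: "p \<in> U"
  shows "fderiv (\<lambda>q. g q v w) p u = g p (christoffel g p u v) w + g p v (christoffel g p u w)"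
proof -
  have "g p (christoffel g p u v) w + g p v (christoffel g p u w) = koszul p u v w + koszul p u w v"
    using g_christoffel[OF p] g_commute[OF p, of v] by simp
  also have "\<dots> = fderiv (\<lambda>q. g q v w) p u"
    unfolding koszul_def
    using fderiv_g_commute[OF p, of v w] fderiv_g_commute[OF p, of u w] fderiv_g_commute[OF p, of u v]
    by (simp add: field_simps)
  finally show ?thesis by simp
qed

definition cov_deriv :: "('a \<Rightarrow> 'a) \<Rightarrow> 'a \<Rightarrow> 'a \<Rightarrow> 'a" where
  "cov_deriv X p u = fderiv X p u + christoffel g p u (X p)"

lemma levi_civita_eq_cov_deriv: "levi_civita g X Y p = cov_deriv Y p (X p)"
  unfolding levi_civita_def cov_deriv_def dir_deriv_def by simp

lemma fderiv_g_fields: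
  assumes p: "p \<in> U" and dX: "X differentiable (at p)" and dY: "Y differentiable (at p)"
  shows "fderiv (\<lambda>q. g q (X q) (Y q)) p u = g p (cov_deriv X p u) (Y p) + g p (X p) (cov_deriv Y p u)"
proof -
  have "(\<lambda>q. g q w (Y q)) differentiable (at p)" for w
    by (rule differentiable_apply_linear_field[OF open_U p _ _ dY])
      (auto intro: linear_g_right differentiable_g p)
  then have "fderiv (\<lambda>q. g q (X q) (Y q)) p u = g p (fderiv X p u) (Y p) + fderiv (\<lambda>q. g q (X p) (Y q)) p u"
    by (intro fderiv_apply_linear_field[OF open_U p _ _ dX, where F="\<lambda>q w. g q w (Y q)"])
      (auto intro: linear_g_left p)
  also have "fderiv (\<lambda>q. g q (X p) (Y q)) p u = g p (X p) (fderiv Y p u) + fderiv (\<lambda>q. g q (X p) (Y p)) p u"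
    by (rule fderiv_apply_linear_field[OF open_U p _ _ dY]) (auto intro: linear_g_right differentiable_g p)
  finally show ?thesis
    unfolding cov_deriv_def fderiv_g_christoffel[OF p] using g_left_rules[OF p] g_right_rules[OF p]
    by simp
qed

abbreviation nabla_xi :: "'a \<Rightarrow> 'a \<Rightarrow> 'a" where
  "nabla_xi \<equiv> cov_deriv xi"

lemma fderiv_eta: assumes p: "p \<in> U"
  shows "fderiv (\<lambda>q. eta q w) p u = g p w (nabla_xi p u) + g p (christoffel g p u w) (xi p)"
proof -
  have "fderiv (\<lambda>q. eta q w) p u = fderiv (\<lambda>q. g q w (xi q)) p u"
    using fderiv_cong_open[OF open_U p, of "\<lambda>q. eta q w" "\<lambda>q. g q w (xi q)"] eta_eq_g_xi by simp
  also have "\<dots> = g p w (fderiv xi p u) + fderiv (\<lambda>q. g q w (xi p)) p u"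
    by (rule fderiv_apply_linear_field[OF open_U p _ _ differentiable_xi[OF p]])
      (auto intro: linear_g_right differentiable_g p)
  finally show ?thesis
    unfolding cov_deriv_def fderiv_g_christoffel[OF p] using g_right_rules[OF p] by simp
qed

lemma nabla_xi_skew: assumes p: "p \<in> U"
  shows "g p w (nabla_xi p v) - g p v (nabla_xi p w) = 2 * g p v (phi p w)"
proof -
  have "ext_deriv1 eta p v w = g p w (nabla_xi p v) - g p v (nabla_xi p w)"
    unfolding ext_deriv1_def fderiv_eta[OF p] using christoffel_commute[OF p, of v w] by simp
  then show ?thesis using ext_deriv1_eta[OF p] by simp
qed

lemma g_phi_skew: assumes p: "p \<in> U" shows "g p v (phi p w) = - g p w (phi p v)"
  using ext_deriv1_eta[OF p, of v w] ext_deriv1_eta[OF p, of w v] unfolding ext_deriv1_def by simp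

lemma eta_phi: assumes p: "p \<in> U" shows "eta p (phi p v) = 0"
proof -
  have "eta p (phi p v) = g p (xi p) (phi p v)" using eta_eq_g_xi[OF p] g_commute[OF p] by simp
  also have "\<dots> = - g p v (phi p (xi p))" by (rule g_phi_skew[OF p])
  also have "\<dots> = 0" using phi_xi[OF p] g_right_rules[OF p] by simp
  finally show ?thesis .
qed

lemma phi_phi_phi: assumes p: "p \<in> U" shows "phi p (phi p (phi p v)) = - phi p v"
  using phi_phi[OF p, of "phi p v"] by (simp add: eta_phi p)

lemma g_nabla_xi_xi: assumes p: "p \<in> U" shows "g p (nabla_xi p u) (xi p) = 0"
proof -
  have "fderiv (\<lambda>q. g q (xi q) (xi q)) p = (\<lambda>u. 0)"
    by (rule fderiv_eq_0_if_constant_on[OF open_U p, where c=1]) (metis eta_eq_g_xi eta_xi)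
  then have "g p (nabla_xi p u) (xi p) + g p (xi p) (nabla_xi p u) = 0"
    using fderiv_g_fields[OF p differentiable_xi[OF p] differentiable_xi[OF p], of u] by simp
  then show ?thesis using g_commute[OF p, of "xi p" "nabla_xi p u"] by simp
qed

lemma nabla_xi_xi: assumes p: "p \<in> U" shows "nabla_xi p (xi p) = 0"
proof (rule g_eqI[OF p])
  fix v
  have "g p (xi p) (nabla_xi p v) = 0" using g_nabla_xi_xi[OF p, of v] g_commute[OF p, of "xi p" "nabla_xi p v"] by simp
  moreover have "g p v (phi p (xi p)) = 0" using phi_xi[OF p] g_right_rules[OF p] by simp
  ultimately have "g p v (nabla_xi p (xi p)) = 0" using nabla_xi_skew[OF p, of "xi p" v] by simp
  then show "g p (nabla_xi p (xi p)) v = g p 0 v"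
    using g_commute[OF p, of v] linear_0[OF linear_g_left[OF p]] by simp
qed

section \<open>The Lie derivative along the Reeb field\<close>

definition lie_xi :: "('a \<Rightarrow> 'a \<Rightarrow> 'a) \<Rightarrow> 'a \<Rightarrow> 'a \<Rightarrow> 'a" where
  "lie_xi T p v = fderiv (\<lambda>q. T q v) p (xi p) - fderiv xi p (T p v) + T p (fderiv xi p v)"

lemma lie_deriv_endo_eq_lie_xi: "linear (T p) \<Longrightarrow> lie_deriv_endo xi T p v = lie_xi T p v"
  unfolding lie_deriv_endo_def lie_bracket_def dir_deriv_def lie_xi_def
  by (simp add: linear_neg)

lemma lie_xi_cong: assumes p: "p \<in> U" and eq: "\<And>q w. q \<in> U \<Longrightarrow> T q w = T' q w"
  shows "lie_xi T p v = lie_xi T' p v"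
proof -
  have "fderiv (\<lambda>q. T q v) p = fderiv (\<lambda>q. T' q v) p"
    by (rule fderiv_cong_open[OF open_U p]) (simp add: eq)
  then show ?thesis unfolding lie_xi_def using eq[OF p] by simp
qed

lemma lie_xi_compose:
  assumes p: "p \<in> U" and linS: "\<And>q. q \<in> U \<Longrightarrow> linear (S q)"
    and dS: "\<And>w. (\<lambda>q. S q w) differentiable (at p)"
    and dT: "(\<lambda>q. T q v) differentiable (at p)"
  shows "lie_xi (\<lambda>q w. S q (T q w)) p v = lie_xi S p (T p v) + S p (lie_xi T p v)"
  using fderiv_apply_linear_field[OF open_U p linS dS dT, of "xi p"] linear_rules[OF linS[OF p]]
  unfolding lie_xi_def by (simp add: algebra_simps)

lemma lie_xi_minus:
  assumes "(\<lambda>q. T q v) differentiable (at p)" "linear (fderiv xi p)"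
  shows "lie_xi (\<lambda>q w. - T q w) p v = - lie_xi T p v"
  using frechet_derivative_at[OF has_derivative_minus[OF frechet_derivative_works[THEN iffD1, OF assms(1)]], symmetric]
    linear_neg[OF assms(2)]
  unfolding lie_xi_def by simp

lemma lie_xi_diff:
  assumes "(\<lambda>q. S q v) differentiable (at p)" "(\<lambda>q. T q v) differentiable (at p)"
    "linear (fderiv xi p)"
  shows "lie_xi (\<lambda>q w. S q w - T q w) p v = lie_xi S p v - lie_xi T p v"
  using frechet_derivative_at[OF has_derivative_diff[OF
        frechet_derivative_works[THEN iffD1, OF assms(1)] frechet_derivative_works[THEN iffD1, OF assms(2)]], symmetric]
    linear_diff[OF assms(3)]
  unfolding lie_xi_def by (simp add: algebra_simps)

lemma lie_xi_scaleR:
  assumes "(\<lambda>q. T q v) differentiable (at p)" "linear (fderiv xi p)"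
  shows "lie_xi (\<lambda>q w. c *\<^sub>R T q w) p v = c *\<^sub>R lie_xi T p v"
  using frechet_derivative_at[OF has_derivative_scaleR_right[OF frechet_derivative_works[THEN iffD1, OF assms(1)]], symmetric]
    linear_scale[OF assms(2)]
  unfolding lie_xi_def by (simp add: algebra_simps)

lemma interior_xi_d_eta: assumes p: "p \<in> U"
  shows "fderiv (\<lambda>r. eta r w) p (xi p) = fderiv (\<lambda>r. eta r (xi p)) p w"
proof -
  have "g p (xi p) (phi p w) = eta p (phi p w)" using eta_eq_g_xi[OF p] g_commute[OF p] by simp
  then have "ext_deriv1 eta p (xi p) w = 0" using ext_deriv1_eta[OF p] eta_phi[OF p] by simp
  then show ?thesis unfolding ext_deriv1_def by simp
qed

lemma lie_xi_eta: assumes p: "p \<in> U"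
  shows "fderiv (\<lambda>q. eta q w) p (xi p) + eta p (fderiv xi p w) = 0"
proof -
  have "fderiv (\<lambda>q. eta q (xi q)) p = (\<lambda>u. 0)"
    by (rule fderiv_eq_0_if_constant_on[OF open_U p, where c=1]) (use eta_xi in metis)
  moreover have "fderiv (\<lambda>q. eta q (xi q)) p w = eta p (fderiv xi p w) + fderiv (\<lambda>q. eta q (xi p)) p w"
    by (rule fderiv_apply_linear_field[OF open_U p _ _ differentiable_xi[OF p]])
      (auto intro: linear_eta differentiable_eta p)
  ultimately show ?thesis using interior_xi_d_eta[OF p, of w] by simp
qed

lemma eta_lie_xi:
  assumes p: "p \<in> U" and eta_T: "\<And>q w. q \<in> U \<Longrightarrow> eta q (T q w) = 0"
    and dT: "(\<lambda>q. T q v) differentiable (at p)"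
  shows "eta p (lie_xi T p v) = 0"
proof -
  have "fderiv (\<lambda>q. eta q (T q v)) p = (\<lambda>u. 0)"
    by (rule fderiv_eq_0_if_constant_on[OF open_U p, where c=0]) (use eta_T in metis)
  moreover have "fderiv (\<lambda>q. eta q (T q v)) p (xi p)
      = eta p (fderiv (\<lambda>q. T q v) p (xi p)) + fderiv (\<lambda>q. eta q (T p v)) p (xi p)"
    by (rule fderiv_apply_linear_field[OF open_U p _ _ dT]) (auto intro: linear_eta differentiable_eta p)
  ultimately show ?thesis
    using lie_xi_eta[OF p, of "T p v"] eta_T[OF p] unfolding lie_xi_def by (simp add: eta_rules p)
qed

lemma lie_xi_phi_anticommute: assumes p: "p \<in> U"
  shows "lie_xi phi p (phi p v) = - phi p (lie_xi phi p v)"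
proof -
  have "lie_xi (\<lambda>q w. phi q (phi q w)) p v = lie_xi phi p (phi p v) + phi p (lie_xi phi p v)"
    by (rule lie_xi_compose[OF p]) (auto intro: linear_phi differentiable_phi p)
  moreover have "lie_xi (\<lambda>q w. phi q (phi q w)) p v = lie_xi (\<lambda>q w. - w + eta q w *\<^sub>R xi q) p v"
    by (rule lie_xi_cong[OF p]) (simp add: phi_phi)
  moreover have "lie_xi (\<lambda>q w. - w + eta q w *\<^sub>R xi q) p v
      = (fderiv (\<lambda>q. eta q v) p (xi p) + eta p (fderiv xi p v)) *\<^sub>R xi p"
  proof -
    have "((\<lambda>q. - v + eta q v *\<^sub>R xi q) has_derivative
        (\<lambda>u. 0 + (eta p v *\<^sub>R fderiv xi p u + fderiv (\<lambda>q. eta q v) p u *\<^sub>R xi p))) (at p)"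
      by (intro has_derivative_add has_derivative_const has_derivative_scaleR
          frechet_derivative_works[THEN iffD1] differentiable_eta differentiable_xi p)
    from frechet_derivative_at[OF this, symmetric]
    have "fderiv (\<lambda>q. - v + eta q v *\<^sub>R xi q) p (xi p)
        = eta p v *\<^sub>R fderiv xi p (xi p) + fderiv (\<lambda>q. eta q v) p (xi p) *\<^sub>R xi p"
      by simp
    moreover have "fderiv xi p (- v + eta p v *\<^sub>R xi p) = - fderiv xi p v + eta p v *\<^sub>R fderiv xi p (xi p)"
      using linear_rules[OF linear_fderiv_xi[OF p]] by simp
    ultimately show ?thesis unfolding lie_xi_def by (simp add: scaleR_add_left)
  qed
  ultimately show ?thesis using lie_xi_eta[OF p, of v] by (simp add: eq_neg_iff_add_eq_0)
qed

lemma lie_xi_g: assumes p: "p \<in> U"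
  shows "fderiv (\<lambda>q. g q v w) p (xi p) + g p (fderiv xi p v) w + g p v (fderiv xi p w)
       = g p (nabla_xi p v) w + g p v (nabla_xi p w)"
  unfolding cov_deriv_def fderiv_g_christoffel[OF p] using christoffel_commute[OF p]
  by (simp add: g_left_rules g_right_rules p algebra_simps)

lemma fderiv_interior_xi_d_eta: assumes p: "p \<in> U"
  shows "fderiv (\<lambda>r. eta r w) p (fderiv xi p v) + fderiv (\<lambda>q. fderiv (\<lambda>r. eta r w) q (xi p)) p v
       = fderiv (\<lambda>r. eta r (fderiv xi p v)) p w + fderiv (\<lambda>q. fderiv (\<lambda>r. eta r (xi p)) q w) p v"
proof -
  have "((\<lambda>q. fderiv (\<lambda>r. eta r w) q (xi q)) has_derivative
     (\<lambda>u. fderiv (\<lambda>r. eta r w) p (fderiv xi p u) + fderiv (\<lambda>q. fderiv (\<lambda>r. eta r w) q (xi p)) p u)) (at p)"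
    by (rule has_derivative_apply_linear_field[OF open_U p _ _ differentiable_xi[OF p],
          where F="\<lambda>q. fderiv (\<lambda>r. eta r w) q"])
      (auto intro: linear_fderiv_eta differentiable_fderiv_eta p)
  moreover have "((\<lambda>q. fderiv (\<lambda>r. eta r (xi q)) q w) has_derivative
     (\<lambda>u. fderiv (\<lambda>r. eta r (fderiv xi p u)) p w + fderiv (\<lambda>q. fderiv (\<lambda>r. eta r (xi p)) q w) p u)) (at p)"
    by (rule has_derivative_apply_linear_field[OF open_U p _ _ differentiable_xi[OF p],
          where F="\<lambda>q a. fderiv (\<lambda>r. eta r a) q w"])
      (auto intro: linear_fderiv_eta_arg differentiable_fderiv_eta p)
  ultimately have hd: "((\<lambda>q. fderiv (\<lambda>r. eta r w) q (xi q) - fderiv (\<lambda>r. eta r (xi q)) q w) has_derivative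
     (\<lambda>u. (fderiv (\<lambda>r. eta r w) p (fderiv xi p u) + fderiv (\<lambda>q. fderiv (\<lambda>r. eta r w) q (xi p)) p u)
       - (fderiv (\<lambda>r. eta r (fderiv xi p u)) p w + fderiv (\<lambda>q. fderiv (\<lambda>r. eta r (xi p)) q w) p u))) (at p)"
    by (rule has_derivative_diff)
  have "fderiv (\<lambda>q. fderiv (\<lambda>r. eta r w) q (xi q) - fderiv (\<lambda>r. eta r (xi q)) q w) p = (\<lambda>u. 0)"
    by (rule fderiv_eq_0_if_constant_on[OF open_U p, where c=0]) (simp add: interior_xi_d_eta)
  from fun_cong[OF trans[OF frechet_derivative_at[OF hd] this], of v] show ?thesis by simp
qed

text \<open>\<open>L\<^sub>\<xi> d\<eta> = d i\<^sub>\<xi> d\<eta> = 0\<close>, written out via \<open>d\<eta> = 2 g(\<cdot>, \<phi>\<cdot>)\<close>.\<close>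
lemma lie_xi_d_eta: assumes p: "p \<in> U"
  shows "fderiv (\<lambda>q. g q v (phi q w)) p (xi p) + g p (fderiv xi p v) (phi p w)
       + g p v (phi p (fderiv xi p w)) = 0"
proof -
  let ?D = "\<lambda>a b. fderiv (\<lambda>r. eta r a) p b"
  let ?DD = "\<lambda>a b c. fderiv (\<lambda>q. fderiv (\<lambda>r. eta r a) q b) p c"
  have eq: "fderiv (\<lambda>q. g q v (phi q w)) p
      = fderiv (\<lambda>q. (1/2) *\<^sub>R (fderiv (\<lambda>r. eta r w) q v - fderiv (\<lambda>r. eta r v) q w)) p"
    by (rule fderiv_cong_open[OF open_U p]) (use ext_deriv1_eta in \<open>simp add: ext_deriv1_def\<close>)
  have hd: "((\<lambda>q. (1/2) *\<^sub>R (fderiv (\<lambda>r. eta r w) q v - fderiv (\<lambda>r. eta r v) q w)) has_derivative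
      (\<lambda>u. (1/2) *\<^sub>R (?DD w v u - ?DD v w u))) (at p)"
    by (intro has_derivative_scaleR_right has_derivative_diff frechet_derivative_works[THEN iffD1]
        differentiable_fderiv_eta p)
  have "fderiv (\<lambda>q. g q v (phi q w)) p (xi p) = (?DD w v (xi p) - ?DD v w (xi p)) / 2"
    using fun_cong[OF trans[OF eq frechet_derivative_at[OF hd, symmetric]], of "xi p"] by simp
  moreover have "?DD w v (xi p) = ?DD w (xi p) v" "?DD v w (xi p) = ?DD v (xi p) w"
    "?DD (xi p) w v = ?DD (xi p) v w"
    by (intro fderiv_fderiv_commute[OF open_U p smooth_eta])+
  moreover have "g p (fderiv xi p v) (phi p w) = (?D w (fderiv xi p v) - ?D (fderiv xi p v) w) / 2"
    "g p v (phi p (fderiv xi p w)) = (?D (fderiv xi p w) v - ?D v (fderiv xi p w)) / 2"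
    using ext_deriv1_eta[OF p, of "fderiv xi p v" w] ext_deriv1_eta[OF p, of v "fderiv xi p w"]
    unfolding ext_deriv1_def by simp_all
  ultimately show ?thesis
    using fderiv_interior_xi_d_eta[OF p, of w v] fderiv_interior_xi_d_eta[OF p, of v w]
    by (simp add: field_simps)
qed

lemma g_lie_xi_phi: assumes p: "p \<in> U"
  shows "g p (nabla_xi p v) (phi p w) + g p v (nabla_xi p (phi p w)) + g p v (lie_xi phi p w) = 0"
proof -
  have "fderiv (\<lambda>q. g q v (phi q w)) p (xi p)
      = g p v (fderiv (\<lambda>q. phi q w) p (xi p)) + fderiv (\<lambda>q. g q v (phi p w)) p (xi p)"
    by (rule fderiv_apply_linear_field[OF open_U p _ _ differentiable_phi[OF p]])
      (auto intro: linear_g_right differentiable_g p)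
  moreover have "fderiv (\<lambda>q. g q v (phi p w)) p (xi p) + g p (fderiv xi p v) (phi p w)
      + g p v (fderiv xi p (phi p w)) = g p (nabla_xi p v) (phi p w) + g p v (nabla_xi p (phi p w))"
    by (rule lie_xi_g[OF p])
  moreover have "g p v (lie_xi phi p w) = g p v (fderiv (\<lambda>q. phi q w) p (xi p))
      - g p v (fderiv xi p (phi p w)) + g p v (phi p (fderiv xi p w))"
    unfolding lie_xi_def by (simp add: g_right_rules p)
  ultimately show ?thesis using lie_xi_d_eta[OF p, of v w] by linarith
qed

abbreviation h :: "'a \<Rightarrow> 'a \<Rightarrow> 'a" where
  "h \<equiv> h_tensor xi phi"

lemma g_phi_phi: assumes p: "p \<in> U"
  shows "g p (phi p x) (phi p y) = g p x y - eta p x * eta p y"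
proof -
  have "g p (phi p x) (phi p y) = - g p y (phi p (phi p x))" by (rule g_phi_skew[OF p])
  also have "\<dots> = g p y x - eta p x * g p y (xi p)"
    by (simp add: phi_phi p g_right_rules)
  also have "\<dots> = g p x y - eta p x * eta p y"
    using g_commute[OF p, of y x] eta_eq_g_xi[OF p, of y] by simp
  finally show ?thesis .
qed

lemma linear_lie_xi_phi: assumes p: "p \<in> U" shows "linear (lie_xi phi p)"
  unfolding lie_xi_def
  by (intro linear_compose_add linear_compose_sub linear_fderiv_phi_arg[OF p]
      linear_compose[OF linear_phi[OF p] linear_fderiv_xi[OF p], unfolded comp_def]
      linear_compose[OF linear_fderiv_xi[OF p] linear_phi[OF p], unfolded comp_def])

lemma eta_lie_xi_phi: "p \<in> U \<Longrightarrow> eta p (lie_xi phi p v) = 0"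
  by (rule eta_lie_xi) (auto intro: eta_phi differentiable_phi)

lemma h_eq_lie_xi_phi: "p \<in> U \<Longrightarrow> h p v = (1/2) *\<^sub>R lie_xi phi p v"
  unfolding h_tensor_def by (simp add: lie_deriv_endo_eq_lie_xi linear_phi)

lemma lie_xi_phi_eq_h: "p \<in> U \<Longrightarrow> lie_xi phi p v = 2 *\<^sub>R h p v"
  by (simp add: h_eq_lie_xi_phi)

lemma linear_h: "p \<in> U \<Longrightarrow> linear (h p)"
  using linear_compose_scale_right[OF linear_lie_xi_phi] h_eq_lie_xi_phi by presburger

lemma h_phi_anticommute: assumes p: "p \<in> U" shows "h p (phi p v) = - phi p (h p v)"
  by (simp add: h_eq_lie_xi_phi p phi_rules lie_xi_phi_anticommute)

lemma eta_h: "p \<in> U \<Longrightarrow> eta p (h p v) = 0"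
  by (simp add: h_eq_lie_xi_phi eta_lie_xi_phi eta_rules)

lemma g_phi_lie_xi_phi_commute: assumes p: "p \<in> U"
  shows "g p (phi p x) (lie_xi phi p u) = g p (phi p u) (lie_xi phi p x)"
  using g_lie_xi_phi[OF p, of "phi p x" u] g_lie_xi_phi[OF p, of "phi p u" x]
    g_commute[OF p, of "nabla_xi p (phi p x)" "phi p u"] g_commute[OF p, of "phi p x" "nabla_xi p (phi p u)"]
  by linarith

lemma g_phi_lie_xi_phi_symmetric: assumes p: "p \<in> U"
  shows "g p v (phi p (lie_xi phi p w)) = g p (phi p (lie_xi phi p v)) w"
proof -
  have "g p v (phi p (lie_xi phi p w)) = - g p (phi p v) (lie_xi phi p w)"
    using g_phi_skew[OF p, of v "lie_xi phi p w"] g_commute[OF p, of "lie_xi phi p w"] by simp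
  also have "\<dots> = - g p (phi p w) (lie_xi phi p v)" using g_phi_lie_xi_phi_commute[OF p] by simp
  also have "\<dots> = g p (phi p (lie_xi phi p v)) w"
    using g_phi_skew[OF p, of w "lie_xi phi p v"] g_commute[OF p, of "lie_xi phi p v"]
      g_commute[OF p, of w] by simp
  finally show ?thesis .
qed

lemma h_symmetric: assumes p: "p \<in> U" shows "g p (h p v) w = g p v (h p w)"
proof -
  let ?L = "lie_xi phi p"
  have "phi p (?L (phi p v)) = ?L v"
    by (simp add: lie_xi_phi_anticommute phi_phi eta_lie_xi_phi phi_rules p)
  moreover have "g p (phi p v) (phi p (?L w)) = g p v (?L w)"
    using g_phi_phi[OF p] eta_lie_xi_phi[OF p] by simp
  ultimately have "g p (?L v) w = g p v (?L w)"
    using g_phi_lie_xi_phi_symmetric[OF p, of "phi p v" w] by simp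
  then show ?thesis by (simp add: h_eq_lie_xi_phi p g_left_rules g_right_rules)
qed

text \<open>Pairing \<open>\<nabla>\<xi>\<close> with \<open>\<phi>u\<close> combines its skew part \<open>\<phi>\<close> with its symmetric part \<open>L\<^sub>\<xi> g\<close>.\<close>
lemma g_nabla_xi_phi: assumes p: "p \<in> U"
  shows "g p (nabla_xi p v) (phi p u) = g p v (phi p (phi p u)) - (1/2) * g p v (lie_xi phi p u)"
  using nabla_xi_skew[OF p, of "phi p u" v] g_lie_xi_phi[OF p, of v u]
    g_commute[OF p, of "phi p u" "nabla_xi p v"]
  by linarith

lemma nabla_xi_eq: assumes p: "p \<in> U" shows "nabla_xi p v = - phi p v - phi p (h p v)"
proof (rule g_eqI[OF p])
  fix w
  let ?L = "lie_xi phi p"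
  have "g p (nabla_xi p v) w = g p (nabla_xi p v) (eta p w *\<^sub>R xi p - phi p (phi p w))"
    using phi_phi[OF p, of w] by simp
  also have "\<dots> = - g p (nabla_xi p v) (phi p (phi p w))"
    using g_nabla_xi_xi[OF p] by (simp add: g_right_rules p)
  also have "\<dots> = g p v (phi p w) - (1/2) * g p v (phi p (?L w))"
    using g_nabla_xi_phi[OF p, of v "phi p w"] lie_xi_phi_anticommute[OF p, of w]
    by (simp add: phi_phi_phi g_right_rules phi_rules p)
  also have "\<dots> = - g p (phi p v) w - (1/2) * g p (phi p (?L v)) w"
    using g_phi_skew[OF p, of v w] g_commute[OF p, of w "phi p v"]
      g_phi_lie_xi_phi_symmetric[OF p, of v w] by simp
  also have "\<dots> = g p (- phi p v - phi p (h p v)) w"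
    by (simp add: h_eq_lie_xi_phi p phi_rules g_left_rules)
  finally show "g p (nabla_xi p v) w = g p (- phi p v - phi p (h p v)) w" .
qed

lemma differentiable_lie_xi_phi: assumes p: "p \<in> U" shows "(\<lambda>q. lie_xi phi q v) differentiable (at p)"
proof -
  have "(\<lambda>q. fderiv (\<lambda>r. phi r v) q (xi q)) differentiable (at p)"
    by (rule differentiable_apply_linear_field[OF open_U p _ _ differentiable_xi[OF p],
          where F="\<lambda>q. fderiv (\<lambda>r. phi r v) q"])
      (auto intro: linear_fderiv_phi differentiable_fderiv_phi p)
  moreover have "(\<lambda>q. fderiv xi q (phi q v)) differentiable (at p)"
    by (rule differentiable_apply_linear_field[OF open_U p _ _ differentiable_phi[OF p],
          where F="\<lambda>q. fderiv xi q"])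
      (auto intro: linear_fderiv_xi differentiable_fderiv_xi p)
  moreover have "(\<lambda>q. phi q (fderiv xi q v)) differentiable (at p)"
    by (rule differentiable_apply_linear_field[OF open_U p _ _ differentiable_fderiv_xi[OF p], where F=phi])
      (auto intro: linear_phi differentiable_phi p)
  ultimately show ?thesis unfolding lie_xi_def by (intro differentiable_add differentiable_diff)
qed

lemma differentiable_h: assumes p: "p \<in> U" shows "(\<lambda>q. h q v) differentiable (at p)"
proof (rule differentiable_cong_open[OF open_U p])
  show "(\<lambda>q. (1/2) *\<^sub>R lie_xi phi q v) differentiable (at p)"
    by (intro differentiable_scaleR differentiable_const differentiable_lie_xi_phi[OF p])
qed (simp add: h_eq_lie_xi_phi)

lemma differentiable_phi_h: "p \<in> U \<Longrightarrow> (\<lambda>q. phi q (h q v)) differentiable (at p)"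
  by (rule differentiable_apply_linear_field[OF open_U _ _ _ differentiable_h, where F=phi])
    (auto intro: linear_phi differentiable_phi)

lemma phi_h_phi: assumes p: "p \<in> U" shows "phi p (h p (phi p v)) = h p v"
  using phi_phi[OF p, of "h p v"] by (simp add: h_phi_anticommute eta_h phi_rules p)

lemma phi_phi_h: assumes p: "p \<in> U" shows "phi p (phi p (h p v)) = - h p v"
  using phi_phi[OF p, of "h p v"] by (simp add: eta_h p)

lemma nabla_xi_nabla_xi: assumes p: "p \<in> U"
  shows "nabla_xi p (nabla_xi p v) = phi p (phi p v) + h p (h p v)"
  by (simp add: nabla_xi_eq p phi_rules linear_rules[OF linear_h] h_phi_anticommute phi_h_phi
      phi_phi_h algebra_simps)

text \<open>The term \<open>\<nabla>\<^sub>v \<nabla>\<^sub>\<xi> \<xi>\<close> vanishes because \<open>\<nabla>\<^sub>\<xi> \<xi> = 0\<close>.\<close>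
lemma curvature_const_xi_xi: assumes p: "p \<in> U"
  shows "curvature g (\<lambda>q. v) xi xi p = - lie_xi nabla_xi p v - nabla_xi p (nabla_xi p v)"
proof -
  have "fderiv (levi_civita g xi xi) p = (\<lambda>u. 0)"
    by (rule fderiv_eq_0_if_constant_on[OF open_U p, where c=0])
      (simp add: levi_civita_eq_cov_deriv nabla_xi_xi)
  then have "levi_civita g (\<lambda>q. v) (levi_civita g xi xi) p = 0"
    unfolding levi_civita_eq_cov_deriv[of "\<lambda>q. v"] cov_deriv_def
    by (simp add: levi_civita_eq_cov_deriv nabla_xi_xi christoffel_zero p)
  moreover have "levi_civita g (\<lambda>q. v) xi = (\<lambda>q. nabla_xi q v)"
    by (rule ext) (simp add: levi_civita_eq_cov_deriv)
  moreover have "lie_bracket (\<lambda>q. v) xi p = fderiv xi p v"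
    unfolding lie_bracket_def dir_deriv_def by simp
  moreover have "christoffel g p (xi p) (nabla_xi p v) = nabla_xi p (nabla_xi p v) - fderiv xi p (nabla_xi p v)"
    using christoffel_commute[OF p, of "xi p" "nabla_xi p v"] unfolding cov_deriv_def by simp
  ultimately show ?thesis
    unfolding curvature_def levi_civita_eq_cov_deriv lie_xi_def by (simp add: cov_deriv_def algebra_simps)
qed

lemma lie_xi_nabla_xi: assumes p: "p \<in> U"
  shows "lie_xi nabla_xi p v = - 2 *\<^sub>R h p v - 2 *\<^sub>R h p (h p v) - phi p (lie_xi h p v)"
proof -
  have "lie_xi nabla_xi p v = lie_xi (\<lambda>q w. - phi q w - phi q (h q w)) p v"
    by (rule lie_xi_cong[OF p]) (rule nabla_xi_eq)
  also have "\<dots> = lie_xi (\<lambda>q w. - phi q w) p v - lie_xi (\<lambda>q w. phi q (h q w)) p v"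
    by (rule lie_xi_diff[OF differentiable_minus[OF differentiable_phi[OF p]] differentiable_phi_h[OF p]
          linear_fderiv_xi[OF p]])
  also have "lie_xi (\<lambda>q w. - phi q w) p v = - lie_xi phi p v"
    by (rule lie_xi_minus[OF differentiable_phi[OF p] linear_fderiv_xi[OF p]])
  also have "lie_xi (\<lambda>q w. phi q (h q w)) p v = lie_xi phi p (h p v) + phi p (lie_xi h p v)"
    by (rule lie_xi_compose[OF p]) (auto intro: linear_phi differentiable_phi differentiable_h p)
  finally show ?thesis by (simp add: lie_xi_phi_eq_h p algebra_simps)
qed

lemma eta_lie_xi_h: "p \<in> U \<Longrightarrow> eta p (lie_xi h p v) = 0"
  by (rule eta_lie_xi) (auto intro: eta_h differentiable_h)

lemma lie_xi_h_phi_anticommute: assumes p: "p \<in> U"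
  shows "lie_xi h p (phi p v) + phi p (lie_xi h p v) = - 4 *\<^sub>R h p (h p v)"
proof -
  have "lie_xi (\<lambda>q w. h q (phi q w)) p v = lie_xi h p (phi p v) + h p (lie_xi phi p v)"
    by (rule lie_xi_compose[OF p]) (auto intro: linear_h differentiable_phi differentiable_h p)
  moreover have "lie_xi (\<lambda>q w. phi q (h q w)) p v = lie_xi phi p (h p v) + phi p (lie_xi h p v)"
    by (rule lie_xi_compose[OF p]) (auto intro: linear_phi differentiable_phi differentiable_h p)
  moreover have "lie_xi (\<lambda>q w. h q (phi q w)) p v = - lie_xi (\<lambda>q w. phi q (h q w)) p v"
  proof -
    have "lie_xi (\<lambda>q w. h q (phi q w)) p v = lie_xi (\<lambda>q w. - phi q (h q w)) p v"
      by (rule lie_xi_cong[OF p]) (rule h_phi_anticommute)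
    also have "\<dots> = - lie_xi (\<lambda>q w. phi q (h q w)) p v"
      by (rule lie_xi_minus[OF differentiable_phi_h[OF p] linear_fderiv_xi[OF p]])
    finally show ?thesis .
  qed
  ultimately have "lie_xi h p (phi p v) + 2 *\<^sub>R h p (h p v) = - (2 *\<^sub>R h p (h p v) + phi p (lie_xi h p v))"
    by (simp add: lie_xi_phi_eq_h p linear_rules[OF linear_h])
  then have L_phi: "lie_xi h p (phi p v) = - (2 *\<^sub>R h p (h p v) + phi p (lie_xi h p v)) - 2 *\<^sub>R h p (h p v)"
    by (simp add: eq_diff_eq)
  have four: "(4::real) *\<^sub>R h p (h p v) = 2 *\<^sub>R h p (h p v) + 2 *\<^sub>R h p (h p v)"
    by (metis scaleR_add_left numeral_Bit0)
  show ?thesis unfolding L_phi using four by (simp add: algebra_simps)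
qed

lemma lie_deriv_endo_scaleR_h:
  "p \<in> U \<Longrightarrow> lie_deriv_endo xi (\<lambda>q w. c *\<^sub>R h q w) p v = c *\<^sub>R lie_xi h p v"
  by (simp add: lie_deriv_endo_eq_lie_xi linear_compose_scale_right linear_h
      lie_xi_scaleR differentiable_h linear_fderiv_xi)

end

section \<open>Weak \<open>(\<kappa>, \<mu>)\<close> spaces\<close>

locale kappa_mu_space = contact_metric +
  fixes \<kappa> \<mu> :: real
  assumes kappa_mu: "\<And>X p. smooth_on U X \<Longrightarrow> p \<in> U \<Longrightarrow>
    curvature g X xi xi p = \<kappa> *\<^sub>R (X p - eta p (X p) *\<^sub>R xi p) + \<mu> *\<^sub>R h_tensor xi phi p (X p)"
begin

lemma phi_lie_xi_h_eq: assumes p: "p \<in> U"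
  shows "phi p (lie_xi h p w) = (1 - \<kappa>) *\<^sub>R phi p (phi p w) + (\<mu> - 2) *\<^sub>R h p w - h p (h p w)"
proof -
  have curv: "\<kappa> *\<^sub>R (w - eta p w *\<^sub>R xi p) + \<mu> *\<^sub>R h p w
      = - (- 2 *\<^sub>R h p w - 2 *\<^sub>R h p (h p w) - phi p (lie_xi h p w)) - (phi p (phi p w) + h p (h p w))"
    using kappa_mu[OF smooth_on_const[of U w] p] curvature_const_xi_xi[OF p, of w]
    unfolding lie_xi_nabla_xi[OF p] nabla_xi_nabla_xi[OF p] by simp
  have "phi p (lie_xi h p w) = (\<kappa> *\<^sub>R (w - eta p w *\<^sub>R xi p) + \<mu> *\<^sub>R h p w)
      - 2 *\<^sub>R h p w - 2 *\<^sub>R h p (h p w) + (phi p (phi p w) + h p (h p w))"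
    unfolding curv by (simp add: algebra_simps)
  also have "w - eta p w *\<^sub>R xi p = - phi p (phi p w)"
    by (simp add: phi_phi p)
  finally show ?thesis by (simp add: algebra_simps scaleR_2)
qed

lemma lie_xi_h_expand: assumes p: "p \<in> U"
  shows "lie_xi h p w = (1 - \<kappa>) *\<^sub>R phi p w + (2 - \<mu>) *\<^sub>R phi p (h p w) + phi p (h p (h p w))"
proof -
  have "lie_xi h p w = - phi p (phi p (lie_xi h p w))"
    using phi_phi[OF p, of "lie_xi h p w"] eta_lie_xi_h[OF p, of w] by simp
  then show ?thesis
    unfolding phi_lie_xi_h_eq[OF p] by (simp add: phi_rules phi_phi_phi p algebra_simps)
qed

lemma h_h_eq: assumes p: "p \<in> U" shows "h p (h p w) = (\<kappa> - 1) *\<^sub>R phi p (phi p w)"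
proof -
  define a m y where "a = (1 - \<kappa>) *\<^sub>R phi p (phi p w)" and "m = (2 - \<mu>) *\<^sub>R h p w"
    and "y = h p (h p w)"
  have "lie_xi h p (phi p w) = a + m - y"
    unfolding lie_xi_h_expand[OF p] a_def m_def y_def
    by (simp add: h_phi_anticommute phi_h_phi phi_phi_h p phi_rules linear_rules[OF linear_h])
  moreover have "phi p (lie_xi h p w) = a - m - y"
    unfolding phi_lie_xi_h_eq[OF p] a_def m_def y_def by (simp add: algebra_simps)
  ultimately have "(a + m - y) + (a - m - y) = - 4 *\<^sub>R y"
    using lie_xi_h_phi_anticommute[OF p, of w] unfolding y_def by simp
  moreover have "(4::real) *\<^sub>R y = 2 *\<^sub>R y + 2 *\<^sub>R y"
    by (metis scaleR_add_left numeral_Bit0)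
  ultimately have "2 *\<^sub>R (a + y) = 0"
    by (simp add: algebra_simps scaleR_2)
  then have "y = - a" by (simp add: eq_neg_iff_add_eq_0 add.commute)
  then show ?thesis unfolding a_def y_def by (simp add: algebra_simps)
qed

lemma lie_xi_h_eq: assumes p: "p \<in> U"
  shows "lie_xi h p w = (2 - \<mu>) *\<^sub>R phi p (h p w) + (2 * (1 - \<kappa>)) *\<^sub>R phi p w"
proof -
  have "phi p (h p (h p w)) = (1 - \<kappa>) *\<^sub>R phi p w"
    by (simp add: h_h_eq p phi_rules phi_phi_phi algebra_simps)
  moreover have "(2 * (1 - \<kappa>)) *\<^sub>R phi p w = (1 - \<kappa>) *\<^sub>R phi p w + (1 - \<kappa>) *\<^sub>R phi p w"
    using scaleR_left_distrib[of "1 - \<kappa>" "1 - \<kappa>" "phi p w"] by simp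
  ultimately show ?thesis unfolding lie_xi_h_expand[OF p] by (simp only: add_ac)
qed

lemma kappa_less_one: assumes "\<exists>p\<in>U. \<exists>v. h p v \<noteq> 0" shows "\<kappa> < 1"
proof (rule ccontr)
  assume "\<not> \<kappa> < 1"
  obtain p v where p: "p \<in> U" and hv: "h p v \<noteq> 0" using assms by blast
  have "g p (h p v) (h p v) = g p v (h p (h p v))" by (rule h_symmetric[OF p])
  also have "\<dots> = - ((\<kappa> - 1) * g p (phi p v) (phi p v))"
    using g_phi_skew[OF p, of v "phi p v"] by (simp add: h_h_eq p g_right_rules)
  also have "\<dots> \<le> 0"
    using \<open>\<not> \<kappa> < 1\<close> g_pos[OF p, of "phi p v"] g_right_rules[OF p]
    by (cases "phi p v = 0") (auto intro: mult_nonneg_nonneg)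
  finally show False using g_pos[OF p hv] by simp
qed

definition h_tilde :: "'a \<Rightarrow> 'a \<Rightarrow> 'a" where
  "h_tilde p v = (1 / 2) *\<^sub>R lie_deriv_endo xi (\<lambda>q w. (1 / sqrt (1 - \<kappa>)) *\<^sub>R h q w) p v"

lemma h_tilde_eq: "p \<in> U \<Longrightarrow>
    h_tilde p v = (1 / (2 * sqrt (1 - \<kappa>))) *\<^sub>R ((2 - \<mu>) *\<^sub>R phi p (h p v) + (2 * (1 - \<kappa>)) *\<^sub>R phi p v)"
  by (simp add: h_tilde_def lie_deriv_endo_scaleR_h lie_xi_h_eq)

lemma h_tilde_h_tilde: assumes k: "\<kappa> < 1" and p: "p \<in> U"
  shows "h_tilde p (h_tilde p v) = ((1 - \<kappa>) - (1 - \<mu> / 2)\<^sup>2) *\<^sub>R phi p (phi p v)"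
proof -
  define c a b where "c = 1 / (2 * sqrt (1 - \<kappa>))" and "a = 2 - \<mu>" and "b = 2 * (1 - \<kappa>)"
  have ht: "h_tilde p x = c *\<^sub>R (a *\<^sub>R phi p (h p x) + b *\<^sub>R phi p x)" for x
    unfolding h_tilde_eq[OF p] c_def a_def b_def ..
  have phi_h_ht: "phi p (h p (h_tilde p v)) = c *\<^sub>R ((a * (\<kappa> - 1)) *\<^sub>R phi p (phi p v) + b *\<^sub>R h p v)"
    unfolding ht by (simp add: phi_rules linear_rules[OF linear_h] p h_phi_anticommute phi_phi_h h_h_eq
        phi_phi_phi)
  have phi_ht: "phi p (h_tilde p v) = c *\<^sub>R (- a *\<^sub>R h p v + b *\<^sub>R phi p (phi p v))"
    unfolding ht by (simp add: phi_rules p phi_phi_h)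
  have "h_tilde p (h_tilde p v) = (c * c * (a * a * (\<kappa> - 1) + b * b)) *\<^sub>R phi p (phi p v)"
    unfolding ht[of "h_tilde p v"] phi_h_ht phi_ht by (simp add: algebra_simps)
  also have "c * c * (a * a * (\<kappa> - 1) + b * b) = (1 - \<kappa>) - (1 - \<mu> / 2)\<^sup>2"
  proof -
    have cc: "c * c = 1 / (4 * (1 - \<kappa>))"
      using k unfolding c_def by (simp add: real_sqrt_mult_self field_simps)
    show ?thesis using k unfolding cc a_def b_def by (simp add: power2_eq_square field_simps)
  qed
  finally show ?thesis .
qed

end

theorem lemma2:
  fixes U :: "'a::euclidean_space set"
    and eta :: "'a \<Rightarrow> 'a \<Rightarrow> real" and xi :: "'a \<Rightarrow> 'a"
    and phi :: "'a \<Rightarrow> 'a \<Rightarrow> 'a" and g :: "'a \<Rightarrow> 'a \<Rightarrow> 'a \<Rightarrow> real"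
    and \<kappa> \<mu> :: real
  assumes cm: "contact_metric_on U eta xi phi g"
    and non_K: "\<exists>p\<in>U. \<exists>v. h_tensor xi phi p v \<noteq> 0"
    and kmu: "\<And>X p. smooth_on U X \<Longrightarrow> p \<in> U \<Longrightarrow>
        curvature g X xi xi p = \<kappa> *\<^sub>R (X p - eta p (X p) *\<^sub>R xi p) + \<mu> *\<^sub>R h_tensor xi phi p (X p)"
  shows "\<kappa> < 1 \<and>
    (\<forall>p\<in>U. \<forall>v.
      (1 / 2) *\<^sub>R lie_deriv_endo xi (\<lambda>q w. (1 / sqrt (1 - \<kappa>)) *\<^sub>R h_tensor xi phi q w) p v
        = (1 / (2 * sqrt (1 - \<kappa>))) *\<^sub>R
            ((2 - \<mu>) *\<^sub>R phi p (h_tensor xi phi p v) + (2 * (1 - \<kappa>)) *\<^sub>R phi p v)) \<and>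
    (\<forall>p\<in>U. \<forall>v.
      (let ht = (\<lambda>w. (1 / 2) *\<^sub>R lie_deriv_endo xi (\<lambda>q w. (1 / sqrt (1 - \<kappa>)) *\<^sub>R h_tensor xi phi q w) p w)
       in ht (ht v) = ((1 - \<kappa>) - (1 - \<mu> / 2)\<^sup>2) *\<^sub>R phi p (phi p v)))"
proof -
  interpret kappa_mu_space U eta xi phi g \<kappa> \<mu>
    by unfold_locales (use cm kmu in auto)
  have "\<kappa> < 1" using kappa_less_one non_K by blast
  then show ?thesis
    using h_tilde_eq h_tilde_h_tilde unfolding h_tilde_def Let_def by auto
qed

end
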